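(* Let $\mathbb{F}\in\{\mathbb{R},\mathbb{C}\}$, $N\ge2$, and let $\mathcal{P}(M,N)$ be the set of Parseval frames for $\mathbb{F}^N$ with $M$ vectors. Suppose an equiangular Parseval frame exists in $\mathcal{P}(M,N)$. Then $\Phi\in\mathcal{P}(M,N)$ maximizes $V_2$ over $\mathcal{P}(M,N)$ if and only if $\Phi$ is an equiangular Parseval frame.
   Context: A Parseval frame for $\mathbb{F}^N$ is a family $\{\varphi_i\}_{i=1}^M\subseteq\mathbb{F}^N$ whose $N\times M$ matrix $\Phi$ (columns $\varphi_i$) satisfies $\Phi\Phi^*=I$; it is equiangular if all $\|\varphi_i\|$ are equal and all $|\langle\varphi_i,\varphi_j\rangle|$, $i\neq j$, are equal. For $K\subseteq[M]$, $\Phi_K$ is the submatrix of columns indexed by $K$; $v_k(F)=\sqrt{\det(F^*F)}$; and $V_k(\Phi)=\sum_{|K|=k}v_k(\Phi_K)$. *)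

theory Defs
  imports "HOL-Analysis.Analysis"
begin

text \<open>A frame with M vectors in F^N is an N x M matrix Phi (rows indexed by 'n,
  columns by 'm); its columns are the frame vectors.  The scalar field F is
  either the reals or the complexes; we work inside complex numbers and encode
  the choice of field by the set Fld of allowed entries (Fld = Reals or UNIV).\<close>

definition frame_vec :: "complex^'m^'n \<Rightarrow> 'm \<Rightarrow> complex^'n" where
  "frame_vec Phi j = (\<chi> i. Phi $ i $ j)"

definition cinner :: "complex^'n \<Rightarrow> complex^'n \<Rightarrow> complex" where
  "cinner u v = (\<Sum>i\<in>UNIV. u $ i * cnj (v $ i))"

definition parseval_frame :: "complex set \<Rightarrow> complex^'m^'n \<Rightarrow> bool" where
  "parseval_frame Fld Phi \<longleftrightarrow>
     (\<forall>i j. Phi $ i $ j \<in> Fld) \<and>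
     (\<forall>i k. (\<Sum>j\<in>UNIV. Phi $ i $ j * cnj (Phi $ k $ j)) = (if i = k then 1 else 0))"

definition equiangular :: "complex^'m^'n \<Rightarrow> bool" where
  "equiangular Phi \<longleftrightarrow>
     (\<exists>c. \<forall>j. norm (frame_vec Phi j) = c) \<and>
     (\<exists>d. \<forall>i j. i \<noteq> j \<longrightarrow> cmod (cinner (frame_vec Phi i) (frame_vec Phi j)) = d)"

definition gram :: "complex^'m^'n \<Rightarrow> 'm \<Rightarrow> 'm \<Rightarrow> complex" where
  "gram Phi a b = (\<Sum>l\<in>UNIV. cnj (Phi $ l $ a) * Phi $ l $ b)"

definition det_on :: "'a set \<Rightarrow> ('a \<Rightarrow> 'a \<Rightarrow> complex) \<Rightarrow> complex" where
  "det_on K A = (\<Sum>p | p permutes K. of_int (sign p) * (\<Prod>i\<in>K. A i (p i)))"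

text \<open>v_k(Phi_K) = sqrt(det(Phi_K^* Phi_K)) (the determinant is real and nonnegative).\<close>
definition vol_sub :: "complex^'m^'n \<Rightarrow> 'm set \<Rightarrow> real" where
  "vol_sub Phi K = sqrt (Re (det_on K (gram Phi)))"

definition V :: "nat \<Rightarrow> complex^'m^'n \<Rightarrow> real" where
  "V k Phi = (\<Sum>K | K \<subseteq> UNIV \<and> card K = k. vol_sub Phi K)"

end

theory Submission
  imports Defs
begin

text \<open>For a \<noteq> b, v_2(Phi_{a,b})^2 = |phi_a|^2 |phi_b|^2 - |<phi_a, phi_b>|^2.  For a Parseval
  frame the Gram matrix Phi^* Phi is an orthogonal projection of rank N, so these squares sum to
  N(N - 1) over the M(M - 1) ordered pairs, whatever Phi is.  Cauchy-Schwarz therefore bounds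
  2 V_2 by sqrt(M(M - 1) N(N - 1)), with equality iff all pairwise volumes agree.  If they all
  equal t, summing over b \<noteq> a gives |phi_a|^2 (N - 1) = (M - 1) t, so for N \<ge> 2 the norms,
  and then the moduli of the inner products, are constant.  Thus the bound is attained exactly
  by the equiangular Parseval frames, and it is the maximum as soon as one of them exists.\<close>

lemma sum_sum_power2_diff:
  fixes y :: "'a \<Rightarrow> real"
  shows "(\<Sum>p\<in>P. \<Sum>q\<in>P. (y p - y q)\<^sup>2) = 2 * ((\<Sum>p\<in>P. (y p)\<^sup>2) * card P - (\<Sum>p\<in>P. y p)\<^sup>2)"
  by (simp add: power2_diff sum.distrib sum_subtractf sum_distrib_left sum_distrib_right
      power2_eq_square sum_product algebra_simps)

lemma sum_squared_eq_sum_of_squares_iff: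
  fixes y :: "'a \<Rightarrow> real"
  assumes "finite P"
  shows "(\<Sum>p\<in>P. y p)\<^sup>2 = (\<Sum>p\<in>P. (y p)\<^sup>2) * card P \<longleftrightarrow> (\<exists>t. \<forall>p\<in>P. y p = t)"
proof -
  have "(\<Sum>p\<in>P. y p)\<^sup>2 = (\<Sum>p\<in>P. (y p)\<^sup>2) * card P \<longleftrightarrow> (\<Sum>p\<in>P. \<Sum>q\<in>P. (y p - y q)\<^sup>2) = 0"
    unfolding sum_sum_power2_diff by (simp add: eq_diff_eq) (rule eq_commute)
  also have "\<dots> \<longleftrightarrow> (\<forall>p\<in>P. \<forall>q\<in>P. y p = y q)"
    using assms by (simp add: sum_nonneg_eq_0_iff sum_nonneg)
  also have "\<dots> \<longleftrightarrow> (\<exists>t. \<forall>p\<in>P. y p = t)"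
    by (cases "P = {}") auto
  finally show ?thesis .
qed

lemma card_offdiag: "card {(a, b). (a::'a::finite) \<noteq> b} = CARD('a) * (CARD('a) - 1)"
proof -
  have "{(a, b). (a::'a) \<noteq> b} = (SIGMA a:UNIV. UNIV - {a})" by auto
  then show ?thesis by simp
qed

lemma sum_offdiag_doubleton:
  fixes f :: "'a::finite set \<Rightarrow> 'b::comm_semiring_1"
  shows "(\<Sum>(a, b)\<in>{(a, b). a \<noteq> b}. f {a, b}) = 2 * (\<Sum>K | card K = 2. f K)"
proof -
  let ?P = "{(a, b). (a::'a) \<noteq> b}"
  let ?g = "\<lambda>(a, b). {a, b} :: 'a set"
  have image: "?g ` ?P = {K. card K = 2}"
    by (auto simp: card_2_iff)
  have fibre: "(\<Sum>p\<in>{p \<in> ?P. ?g p = K}. f (?g p)) = 2 * f K" if K_in: "K \<in> ?g ` ?P" for K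
  proof -
    obtain x y where K: "K = {x, y}" "x \<noteq> y" using K_in by auto
    then have "{p \<in> ?P. ?g p = K} = {(x, y), (y, x)}" by (auto simp: doubleton_eq_iff)
    with K show ?thesis by (simp add: mult_2 insert_commute)
  qed
  have "(\<Sum>(a, b)\<in>?P. f {a, b}) = (\<Sum>p\<in>?P. f (?g p))"
    by (simp add: case_prod_unfold)
  also have "\<dots> = (\<Sum>K\<in>?g ` ?P. \<Sum>p\<in>{p \<in> ?P. ?g p = K}. f (?g p))"
    by (rule sum.image_gen) simp
  also have "\<dots> = (\<Sum>K\<in>?g ` ?P. 2 * f K)"
    by (rule sum.cong[OF refl fibre])
  also have "\<dots> = 2 * (\<Sum>K | card K = 2. f K)"
    by (simp add: image sum_distrib_left)
  finally show ?thesis .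
qed

lemma det_on_doubleton:
  assumes "a \<noteq> b"
  shows "det_on {a, b} A = A a a * A b b - A a b * A b a"
proof -
  have "{p. p permutes {a, b}} = {id, Transposition.transpose a b}"
    by (auto simp: permutes_doubleton_iff)
  moreover have "id \<noteq> Transposition.transpose a b"
    using assms by (metis id_apply transpose_apply_first)
  ultimately show ?thesis
    using assms by (simp add: det_on_def sign_swap_id)
qed

lemma power2_norm_vec: "(norm (x :: 'a::real_normed_vector^'n))\<^sup>2 = (\<Sum>i\<in>UNIV. (norm (x $ i))\<^sup>2)"
  by (simp add: norm_vec_def L2_set_def sum_nonneg)

lemma cinner_self: "cinner x x = of_real ((norm x)\<^sup>2)"
  by (simp add: cinner_def power2_norm_vec of_real_sum flip: complex_norm_square)

lemma cinner_commute: "cinner y x = cnj (cinner x y)"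
  by (simp add: cinner_def mult.commute)

lemma norm_cinner_le: "cmod (cinner x y) \<le> norm x * norm y"
proof -
  have "cmod (cinner x y) \<le> (\<Sum>i\<in>UNIV. \<bar>cmod (x $ i)\<bar> * \<bar>cmod (y $ i)\<bar>)"
    unfolding cinner_def by (rule order_trans[OF norm_sum]) (simp add: norm_mult)
  also have "\<dots> \<le> norm x * norm y"
    unfolding norm_vec_def by (rule L2_set_mult_ineq)
  finally show ?thesis .
qed

lemma gram_eq_cinner: "gram Phi a b = cinner (frame_vec Phi b) (frame_vec Phi a)"
  by (simp add: gram_def cinner_def frame_vec_def mult.commute)

lemma parseval_frame_sum_norm_cinner:
  fixes Phi :: "complex^'m^'n"
  assumes "parseval_frame Fld Phi"
  shows "(\<Sum>j\<in>UNIV. (cmod (cinner x (frame_vec Phi j)))\<^sup>2) = (norm x)\<^sup>2"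
proof -
  have rows: "(\<Sum>j\<in>UNIV. Phi $ k $ j * cnj (Phi $ i $ j)) = (if k = i then 1 else 0)" for i k
    using assms by (simp add: parseval_frame_def)
  have "complex_of_real (\<Sum>j\<in>UNIV. (cmod (cinner x (frame_vec Phi j)))\<^sup>2)
      = (\<Sum>j\<in>UNIV. cinner x (frame_vec Phi j) * cnj (cinner x (frame_vec Phi j)))"
    by (simp add: of_real_sum flip: complex_norm_square)
  also have "\<dots> = (\<Sum>j\<in>UNIV. \<Sum>i\<in>UNIV. \<Sum>k\<in>UNIV. x $ i * cnj (x $ k) * (Phi $ k $ j * cnj (Phi $ i $ j)))"
    by (simp add: cinner_def frame_vec_def sum_product mult_ac)
  also have "\<dots> = (\<Sum>i\<in>UNIV. \<Sum>k\<in>UNIV. \<Sum>j\<in>UNIV. x $ i * cnj (x $ k) * (Phi $ k $ j * cnj (Phi $ i $ j)))"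
    by (subst sum.swap) (rule sum.cong[OF refl], rule sum.swap)
  also have "\<dots> = (\<Sum>i\<in>UNIV. x $ i * cnj (x $ i))"
    by (simp add: rows if_distrib[of "(*) _"] cong: if_cong flip: sum_distrib_left)
  also have "\<dots> = complex_of_real ((norm x)\<^sup>2)"
    using cinner_self[of x] by (simp add: cinner_def)
  finally show ?thesis by (simp only: of_real_eq_iff)
qed

lemma parseval_frame_sum_norm_frame_vec:
  fixes Phi :: "complex^'m^'n"
  assumes "parseval_frame Fld Phi"
  shows "(\<Sum>j\<in>UNIV. (norm (frame_vec Phi j))\<^sup>2) = CARD('n)"
proof -
  have "complex_of_real (\<Sum>j\<in>UNIV. (norm (frame_vec Phi j))\<^sup>2)
      = (\<Sum>j\<in>UNIV. \<Sum>i\<in>UNIV. Phi $ i $ j * cnj (Phi $ i $ j))"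
    by (simp add: power2_norm_vec of_real_sum frame_vec_def flip: complex_norm_square)
  also have "\<dots> = (\<Sum>i\<in>UNIV. \<Sum>j\<in>UNIV. Phi $ i $ j * cnj (Phi $ i $ j))"
    by (rule sum.swap)
  also have "\<dots> = of_nat CARD('n)"
    using assms by (simp add: parseval_frame_def)
  finally show ?thesis
    by (metis of_real_of_nat_eq of_real_eq_iff)
qed

definition area_sq :: "complex^'m^'n \<Rightarrow> 'm \<Rightarrow> 'm \<Rightarrow> real" where
  "area_sq Phi a b = (norm (frame_vec Phi a))\<^sup>2 * (norm (frame_vec Phi b))\<^sup>2
     - (cmod (cinner (frame_vec Phi a) (frame_vec Phi b)))\<^sup>2"

lemma area_sq_nonneg: "0 \<le> area_sq Phi a b"
proof -
  have "cmod (cinner (frame_vec Phi a) (frame_vec Phi b)) \<le> norm (frame_vec Phi a) * norm (frame_vec Phi b)"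
    by (rule norm_cinner_le)
  then have "(cmod (cinner (frame_vec Phi a) (frame_vec Phi b)))\<^sup>2 \<le> (norm (frame_vec Phi a) * norm (frame_vec Phi b))\<^sup>2"
    by (rule power_mono) simp
  then show ?thesis
    by (simp add: area_sq_def power_mult_distrib)
qed

lemma area_sq_self: "area_sq Phi a a = 0"
  by (simp add: area_sq_def cinner_self del: of_real_power)

lemma vol_sub_doubleton:
  assumes "a \<noteq> b"
  shows "vol_sub Phi {a, b} = sqrt (area_sq Phi a b)"
proof -
  have "gram Phi a b * gram Phi b a = of_real ((cmod (cinner (frame_vec Phi a) (frame_vec Phi b)))\<^sup>2)"
    by (simp add: gram_eq_cinner cinner_commute[of "frame_vec Phi a" "frame_vec Phi b"] flip: complex_norm_square)
  then show ?thesis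
    using assms by (simp add: vol_sub_def det_on_doubleton gram_eq_cinner cinner_self area_sq_def)
qed

lemma parseval_frame_sum_area_sq:
  fixes Phi :: "complex^'m^'n"
  assumes "parseval_frame Fld Phi"
  shows "(\<Sum>b\<in>UNIV. area_sq Phi a b) = (norm (frame_vec Phi a))\<^sup>2 * (real CARD('n) - 1)"
proof -
  have "(\<Sum>b\<in>UNIV. area_sq Phi a b) = (norm (frame_vec Phi a))\<^sup>2 * (\<Sum>b\<in>UNIV. (norm (frame_vec Phi b))\<^sup>2)
      - (\<Sum>b\<in>UNIV. (cmod (cinner (frame_vec Phi a) (frame_vec Phi b)))\<^sup>2)"
    by (simp add: area_sq_def sum_subtractf sum_distrib_left)
  then show ?thesis
    by (simp add: parseval_frame_sum_norm_cinner[OF assms] parseval_frame_sum_norm_frame_vec[OF assms]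
        algebra_simps)
qed

lemma sum_offdiag_eq_sum_sum:
  fixes f :: "'a::finite \<Rightarrow> 'a \<Rightarrow> 'b::comm_monoid_add"
  assumes "\<And>a. f a a = 0"
  shows "(\<Sum>(a, b)\<in>{(a, b). a \<noteq> b}. f a b) = (\<Sum>a\<in>UNIV. \<Sum>b\<in>UNIV. f a b)"
proof -
  have "(\<Sum>(a, b)\<in>{(a, b). a \<noteq> b}. f a b) = (\<Sum>(a, b)\<in>UNIV. f a b)"
    by (rule sum.mono_neutral_left) (auto simp: assms)
  then show ?thesis
    by (simp add: sum.cartesian_product)
qed

lemma parseval_frame_sum_offdiag_area_sq:
  fixes Phi :: "complex^'m^'n"
  assumes "parseval_frame Fld Phi"
  shows "(\<Sum>(a, b)\<in>{(a, b). a \<noteq> b}. area_sq Phi a b) = CARD('n) * (real CARD('n) - 1)"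
  by (simp add: sum_offdiag_eq_sum_sum area_sq_self parseval_frame_sum_area_sq[OF assms]
      parseval_frame_sum_norm_frame_vec[OF assms] flip: sum_distrib_right)

lemma V2_eq_sum_offdiag:
  "V 2 Phi = (\<Sum>p\<in>{(a, b). a \<noteq> b}. vol_sub Phi {fst p, snd p}) / 2"
  using sum_offdiag_doubleton[of "vol_sub Phi"] by (simp add: V_def case_prod_unfold)

lemma parseval_frame_sum_squares_vol_sub:
  fixes Phi :: "complex^'m^'n"
  assumes "parseval_frame Fld Phi"
  shows "(\<Sum>p\<in>{(a, b). a \<noteq> b}. (vol_sub Phi {fst p, snd p})\<^sup>2) * card {(a, b). (a::'m) \<noteq> b}
       = CARD('m) * (real CARD('m) - 1) * CARD('n) * (real CARD('n) - 1)"
proof -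
  have "(\<Sum>p\<in>{(a, b). a \<noteq> b}. (vol_sub Phi {fst p, snd p})\<^sup>2)
      = (\<Sum>(a, b)\<in>{(a, b). a \<noteq> b}. area_sq Phi a b)"
    by (intro sum.cong refl) (auto simp: vol_sub_doubleton area_sq_nonneg)
  moreover have "real (card {(a, b). (a::'m) \<noteq> b}) = CARD('m) * (real CARD('m) - 1)"
    by (simp add: card_offdiag of_nat_diff Suc_leI)
  ultimately show ?thesis
    by (simp add: parseval_frame_sum_offdiag_area_sq[OF assms])
qed

lemma parseval_frame_equiangular_iff:
  fixes Phi :: "complex^'m^'n"
  assumes "parseval_frame Fld Phi" and "CARD('n) \<ge> 2"
  shows "equiangular Phi \<longleftrightarrow> (\<exists>t. \<forall>a b. a \<noteq> b \<longrightarrow> area_sq Phi a b = t)"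
proof
  assume "equiangular Phi"
  then obtain c d where "\<And>j. norm (frame_vec Phi j) = c"
    and "\<And>i j. i \<noteq> j \<Longrightarrow> cmod (cinner (frame_vec Phi i) (frame_vec Phi j)) = d"
    unfolding equiangular_def by blast
  then show "\<exists>t. \<forall>a b. a \<noteq> b \<longrightarrow> area_sq Phi a b = t"
    by (auto simp: area_sq_def)
next
  assume "\<exists>t. \<forall>a b. a \<noteq> b \<longrightarrow> area_sq Phi a b = t"
  then obtain t where t: "\<And>a b. a \<noteq> b \<Longrightarrow> area_sq Phi a b = t" by blast
  define c where "c = sqrt ((real CARD('m) - 1) * t / (real CARD('n) - 1))"
  have norm_eq: "norm (frame_vec Phi a) = c" for a
  proof -
    have "(norm (frame_vec Phi a))\<^sup>2 * (real CARD('n) - 1) = (\<Sum>b\<in>UNIV - {a}. area_sq Phi a b)"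
      by (simp add: sum_diff1 area_sq_self parseval_frame_sum_area_sq[OF assms(1)])
    also have "\<dots> = (real CARD('m) - 1) * t"
      by (simp add: t card_Diff_singleton of_nat_diff Suc_leI)
    finally have "(norm (frame_vec Phi a))\<^sup>2 = (real CARD('m) - 1) * t / (real CARD('n) - 1)"
      using assms(2) by (simp add: field_simps)
    then show ?thesis
      unfolding c_def by (simp add: real_sqrt_unique)
  qed
  have "cmod (cinner (frame_vec Phi a) (frame_vec Phi b)) = sqrt (c\<^sup>2 * c\<^sup>2 - t)" if "a \<noteq> b" for a b
    using t[OF that] by (intro real_sqrt_unique[symmetric]) (auto simp: area_sq_def norm_eq)
  then show "equiangular Phi"
    unfolding equiangular_def using norm_eq by blast
qed

lemma V2_parseval_frame_le:
  fixes Phi :: "complex^'m^'n"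
  assumes "parseval_frame Fld Phi"
  shows "V 2 Phi \<le> sqrt (CARD('m) * (real CARD('m) - 1) * CARD('n) * (real CARD('n) - 1)) / 2"
proof -
  have "(2 * V 2 Phi)\<^sup>2 \<le> CARD('m) * (real CARD('m) - 1) * CARD('n) * (real CARD('n) - 1)"
    using sum_squared_le_sum_of_squares[of "\<lambda>p. vol_sub Phi {fst p, snd p}" "{(a, b). a \<noteq> b}"]
    by (simp add: V2_eq_sum_offdiag parseval_frame_sum_squares_vol_sub[OF assms])
  then show ?thesis
    using real_le_rsqrt by fastforce
qed

lemma V2_parseval_frame_eq_iff:
  fixes Phi :: "complex^'m^'n"
  assumes "parseval_frame Fld Phi" and "CARD('n) \<ge> 2"
  shows "V 2 Phi = sqrt (CARD('m) * (real CARD('m) - 1) * CARD('n) * (real CARD('n) - 1)) / 2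
    \<longleftrightarrow> equiangular Phi"
proof -
  let ?P = "{(a, b). (a::'m) \<noteq> b}"
  let ?B = "CARD('m) * (real CARD('m) - 1) * CARD('n) * (real CARD('n) - 1)"
  have "0 \<le> 2 * V 2 Phi"
    unfolding V2_eq_sum_offdiag by (auto simp: vol_sub_doubleton area_sq_nonneg intro: sum_nonneg)
  then have "sqrt ((2 * V 2 Phi)\<^sup>2) = 2 * V 2 Phi"
    by (rule real_sqrt_unique[OF refl])
  then have "V 2 Phi = sqrt ?B / 2 \<longleftrightarrow> sqrt ((2 * V 2 Phi)\<^sup>2) = sqrt ?B"
    by auto
  also have "\<dots> \<longleftrightarrow> (2 * V 2 Phi)\<^sup>2 = ?B"
    by (rule real_sqrt_eq_iff)
  also have "\<dots> \<longleftrightarrow> (\<exists>t. \<forall>p\<in>?P. vol_sub Phi {fst p, snd p} = t)"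
    using sum_squared_eq_sum_of_squares_iff[of ?P "\<lambda>p. vol_sub Phi {fst p, snd p}"]
    by (simp add: V2_eq_sum_offdiag parseval_frame_sum_squares_vol_sub[OF assms(1)])
  also have "\<dots> \<longleftrightarrow> (\<exists>t. \<forall>a b. a \<noteq> b \<longrightarrow> area_sq Phi a b = t)"
  proof
    assume "\<exists>t. \<forall>p\<in>?P. vol_sub Phi {fst p, snd p} = t"
    then obtain t where "\<And>a b. a \<noteq> b \<Longrightarrow> sqrt (area_sq Phi a b) = t"
      by (auto simp: vol_sub_doubleton[symmetric])
    then have "\<And>a b. a \<noteq> b \<Longrightarrow> area_sq Phi a b = t\<^sup>2"
      by (metis area_sq_nonneg real_sqrt_pow2)
    then show "\<exists>t. \<forall>a b. a \<noteq> b \<longrightarrow> area_sq Phi a b = t" by blast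
  next
    assume "\<exists>t. \<forall>a b. a \<noteq> b \<longrightarrow> area_sq Phi a b = t"
    then show "\<exists>t. \<forall>p\<in>?P. vol_sub Phi {fst p, snd p} = t"
      by (auto simp: vol_sub_doubleton)
  qed
  also have "\<dots> \<longleftrightarrow> equiangular Phi"
    using parseval_frame_equiangular_iff[OF assms] by simp
  finally show ?thesis .
qed

theorem corollary11:
  fixes Fld :: "complex set" and Phi :: "complex^'m^'n"
  assumes "Fld = \<real> \<or> Fld = UNIV"
    and "CARD('n) \<ge> 2"
    and "\<exists>Psi :: complex^'m^'n. parseval_frame Fld Psi \<and> equiangular Psi"
    and "parseval_frame Fld Phi"
  shows "(\<forall>Psi :: complex^'m^'n. parseval_frame Fld Psi \<longrightarrow> V 2 Psi \<le> V 2 Phi)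
         \<longleftrightarrow> equiangular Phi"
proof -
  let ?bound = "sqrt (CARD('m) * (real CARD('m) - 1) * CARD('n) * (real CARD('n) - 1)) / 2"
  obtain Psi0 :: "complex^'m^'n" where Psi0: "parseval_frame Fld Psi0" "equiangular Psi0"
    using assms(3) by blast
  have attains: "V 2 Psi = ?bound \<longleftrightarrow> equiangular Psi" if "parseval_frame Fld Psi" for Psi :: "complex^'m^'n"
    using V2_parseval_frame_eq_iff[OF that assms(2)] .
  have "V 2 Psi0 = ?bound"
    using attains[OF Psi0(1)] Psi0(2) by blast
  show ?thesis
  proof
    assume "\<forall>Psi :: complex^'m^'n. parseval_frame Fld Psi \<longrightarrow> V 2 Psi \<le> V 2 Phi"
    then have "V 2 Psi0 \<le> V 2 Phi"
      using Psi0(1) by blast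
    then have "?bound \<le> V 2 Phi"
      using \<open>V 2 Psi0 = ?bound\<close> by simp
    then show "equiangular Phi"
      using V2_parseval_frame_le[OF assms(4)] attains[OF assms(4)] by linarith
  next
    assume "equiangular Phi"
    show "\<forall>Psi :: complex^'m^'n. parseval_frame Fld Psi \<longrightarrow> V 2 Psi \<le> V 2 Phi"
    proof (intro allI impI)
      fix Psi :: "complex^'m^'n"
      assume "parseval_frame Fld Psi"
      then have "V 2 Psi \<le> ?bound"
        by (rule V2_parseval_frame_le)
      also have "?bound = V 2 Phi"
        using attains[OF assms(4)] \<open>equiangular Phi\<close> by simp
      finally show "V 2 Psi \<le> V 2 Phi" .
    qed
  qed
qed

end
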